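(* Let $\vec{\mathcal H}=(V,\mathcal A)$ be a directed hypergraph and $s,t\in V$ distinct. Let $\vec G=(V',A')$ be the directed graph with $V'=V\cup\{w_{(X,v)}:(X,v)\in\mathcal A\}$ (one new vertex per hyperarc) whose arc set contains, for every hyperarc $(X,v)\in\mathcal A$, the arc $w_{(X,v)}v$ and, for every $x\in X$, $|\mathcal A|+1$ parallel arcs $x\,w_{(X,v)}$; let $\overleftarrow G$ be obtained from $\vec G$ by reversing every arc. Then $S^{\vec{\mathcal H}}_{s,t}=V\cap S^{\vec G}_{s,t}$ and $T^{\vec{\mathcal H}}_{t,s}=V\cap S^{\overleftarrow G}_{t,s}$.
   Context: A directed hypergraph $\vec{\mathcal H}=(V,\mathcal A)$ has finite vertex set $V$ and a finite multiset $\mathcal A$ of hyperarcs $(X,v)$ with $X\subseteq V$, $v\in V\setminus X$. For $\emptyset\ne Z\subsetneq V$: $d^+_{\vec{\mathcal H}}(Z)$ is the number of hyperarcs $(X,v)$ with $v\notin Z$ and $X\cap Z\ne\emptyset$; $d^-_{\vec{\mathcal H}}(Z)$ is the number of hyperarcs $(X,v)$ with $v\in Z$ and $X\not\subseteq Z$. In a directed graph $G$, $d^+_G(Z)$ is the number of arcs with tail in $Z$ and head outside $Z$. For vertices $a\ne b$, an $(a,b)$-separator is a vertex set containing $a$ but not $b$. $S^{\vec{\mathcal H}}_{s,t}$ denotes the (unique) $(s,t)$-separator of minimum $d^+_{\vec{\mathcal H}}$ that is contained in every $(s,t)$-separator of minimum $d^+_{\vec{\mathcal H}}$; $T^{\vec{\mathcal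 H}}_{t,s}$ denotes the (unique) $(t,s)$-separator of minimum $d^-_{\vec{\mathcal H}}$ that is contained in every $(t,s)$-separator of minimum $d^-_{\vec{\mathcal H}}$. For a directed graph $G$, $S^{G}_{a,b}$ denotes the unique $(a,b)$-separator of minimum $d^+_G$ contained in every $(a,b)$-separator of minimum $d^+_G$. (Uniqueness follows from submodularity of these degree functions.) *)

theory Defs
  imports Main "HOL-Library.Multiset"
begin

text \<open>A directed hypergraph is given by a finite vertex set V and a finite family of
hyperarcs indexed by a finite set E (this represents a finite multiset of hyperarcs;
parallel hyperarcs have distinct indices). Hyperarc e is (fst (A e), snd (A e)) = (X, v).\<close>

definition dir_hypergraph :: "'a set \<Rightarrow> 'e set \<Rightarrow> ('e \<Rightarrow> 'a set \<times> 'a) \<Rightarrow> bool" where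
  "dir_hypergraph V E A \<longleftrightarrow> finite V \<and> finite E \<and>
     (\<forall>e\<in>E. fst (A e) \<subseteq> V \<and> snd (A e) \<in> V \<and> snd (A e) \<notin> fst (A e))"

definition hyp_dout :: "'e set \<Rightarrow> ('e \<Rightarrow> 'a set \<times> 'a) \<Rightarrow> 'a set \<Rightarrow> nat" where
  "hyp_dout E A Z = card {e\<in>E. snd (A e) \<notin> Z \<and> fst (A e) \<inter> Z \<noteq> {}}"

definition hyp_din :: "'e set \<Rightarrow> ('e \<Rightarrow> 'a set \<times> 'a) \<Rightarrow> 'a set \<Rightarrow> nat" where
  "hyp_din E A Z = card {e\<in>E. snd (A e) \<in> Z \<and> \<not> fst (A e) \<subseteq> Z}"

text \<open>Directed (multi)graph: arcs form a multiset of (tail, head) pairs.\<close>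
definition graph_dout :: "('v \<times> 'v) multiset \<Rightarrow> 'v set \<Rightarrow> nat" where
  "graph_dout Arcs Z = size (filter_mset (\<lambda>(x, y). x \<in> Z \<and> y \<notin> Z) Arcs)"

definition separator :: "'v set \<Rightarrow> 'v \<Rightarrow> 'v \<Rightarrow> 'v set \<Rightarrow> bool" where
  "separator W a b Z \<longleftrightarrow> Z \<subseteq> W \<and> a \<in> Z \<and> b \<notin> Z"

definition min_separator :: "'v set \<Rightarrow> ('v set \<Rightarrow> nat) \<Rightarrow> 'v \<Rightarrow> 'v \<Rightarrow> 'v set \<Rightarrow> bool" where
  "min_separator W f a b Z \<longleftrightarrow> separator W a b Z \<and>
     (\<forall>Z'. separator W a b Z' \<longrightarrow> f Z \<le> f Z')"

definition smallest_min_sep :: "'v set \<Rightarrow> ('v set \<Rightarrow> nat) \<Rightarrow> 'v \<Rightarrow> 'v \<Rightarrow> 'v set" where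
  "smallest_min_sep W f a b = (THE Z. min_separator W f a b Z \<and>
     (\<forall>Z'. min_separator W f a b Z' \<longrightarrow> Z \<subseteq> Z'))"

text \<open>The auxiliary digraph: vertices Inl v (v in V) and Inr e (one per hyperarc).\<close>
definition aux_vertices :: "'a set \<Rightarrow> 'e set \<Rightarrow> ('a + 'e) set" where
  "aux_vertices V E = Inl ` V \<union> Inr ` E"

definition aux_arcs :: "'e set \<Rightarrow> ('e \<Rightarrow> 'a set \<times> 'a) \<Rightarrow> (('a + 'e) \<times> ('a + 'e)) multiset" where
  "aux_arcs E A = (\<Sum>e\<in>E. {#(Inr e, Inl (snd (A e)))#} +
      (\<Sum>x\<in>fst (A e). replicate_mset (card E + 1) (Inl x, Inr e)))"

definition reverse_arcs :: "('v \<times> 'v) multiset \<Rightarrow> ('v \<times> 'v) multiset" where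
  "reverse_arcs Arcs = image_mset prod.swap Arcs"

end

theory Submission
  imports Defs
begin

(* Projecting a separator Z' of the auxiliary digraph to V never increases the cost: if a
   hyperarc (X, v) leaves the projection, then either w_(X,v) lies in Z' and its arc to v
   leaves Z', or it does not and one of the arcs x w_(X,v) leaves Z'. Conversely, a separator
   Z of the hypergraph lifts to Z together with all w_(X,v) for which X meets Z, and the lift
   has the same cost. So projection and lifting exchange minimum separators; projection is
   monotone and undoes lifting, hence it maps the smallest minimum separator of the digraph
   (which exists since graph cuts are submodular) to that of the hypergraph. For the in-degree
   the same argument runs in the reversed digraph, lifting Z by the w_(X,v) with X inside Z. *)

definition is_smallest_min_sep :: "'v set \<Rightarrow> ('v set \<Rightarrow> nat) \<Rightarrow> 'v \<Rightarrow> 'v \<Rightarrow> 'v set \<Rightarrow> bool" where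
  "is_smallest_min_sep W f a b Z \<longleftrightarrow>
     min_separator W f a b Z \<and> (\<forall>Z'. min_separator W f a b Z' \<longrightarrow> Z \<subseteq> Z')"

lemma smallest_min_sep_eq:
  assumes "is_smallest_min_sep W f a b Z"
  shows "smallest_min_sep W f a b = Z"
  unfolding smallest_min_sep_def
proof (rule the_equality)
  show "min_separator W f a b Z \<and> (\<forall>Z'. min_separator W f a b Z' \<longrightarrow> Z \<subseteq> Z')"
    using assms unfolding is_smallest_min_sep_def .
  show "Y = Z" if "min_separator W f a b Y \<and> (\<forall>Z'. min_separator W f a b Z' \<longrightarrow> Y \<subseteq> Z')" for Y
    using that assms unfolding is_smallest_min_sep_def by blast
qed

lemma min_separator_exists:
  assumes "a \<in> W" "a \<noteq> b"
  shows "\<exists>Z. min_separator W f a b Z"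
proof -
  have "separator W a b {a}"
    using assms by (simp add: separator_def)
  then show ?thesis
    unfolding min_separator_def by (rule ex_has_least_nat)
qed

text \<open>A minimum separator of least cardinality is contained in every other one, since by
  submodularity its intersection with another minimum separator is again minimum.\<close>

lemma is_smallest_min_sep_exists:
  assumes "finite W" "a \<in> W" "a \<noteq> b"
    and submodular: "\<And>X Y. separator W a b X \<Longrightarrow> separator W a b Y \<Longrightarrow>
                              f (X \<inter> Y) + f (X \<union> Y) \<le> f X + f Y"
  shows "\<exists>Z. is_smallest_min_sep W f a b Z"
proof -
  obtain Z where Z: "min_separator W f a b Z"
    and Z_least: "\<And>Y. min_separator W f a b Y \<Longrightarrow> card Z \<le> card Y"
    using min_separator_exists[OF assms(2,3)] ex_has_least_nat[where m = card] by metis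
  have "Z \<subseteq> Y" if Y: "min_separator W f a b Y" for Y
  proof -
    have sep: "separator W a b Z" "separator W a b Y"
      "separator W a b (Z \<inter> Y)" "separator W a b (Z \<union> Y)"
      using Z Y by (auto simp: min_separator_def separator_def)
    then have "f Y \<le> f (Z \<union> Y)"
      using Y by (simp add: min_separator_def)
    with submodular[OF sep(1,2)] have "f (Z \<inter> Y) \<le> f Z"
      by linarith
    moreover have "f Z \<le> f Y'" if "separator W a b Y'" for Y'
      using Z that by (simp add: min_separator_def)
    ultimately have "min_separator W f a b (Z \<inter> Y)"
      using sep(3) unfolding min_separator_def by (meson order_trans)
    then have "card Z \<le> card (Z \<inter> Y)"
      by (rule Z_least)
    moreover have "finite Z"
      using sep(1) \<open>finite W\<close> by (meson finite_subset separator_def)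
    ultimately have "Z \<inter> Y = Z"
      using card_seteq[of Z "Z \<inter> Y"] by blast
    then show "Z \<subseteq> Y"
      by blast
  qed
  with Z show ?thesis
    unfolding is_smallest_min_sep_def by blast
qed

locale separator_reduction =
  fixes W :: "'w set" and f :: "'w set \<Rightarrow> nat" and a' b' :: 'w
    and V :: "'v set" and h :: "'v set \<Rightarrow> nat" and a b :: 'v
    and proj :: "'w set \<Rightarrow> 'v set" and lift :: "'v set \<Rightarrow> 'w set"
  assumes proj_separator: "\<And>Z'. separator W a' b' Z' \<Longrightarrow> separator V a b (proj Z')"
    and lift_separator: "\<And>Z. separator V a b Z \<Longrightarrow> separator W a' b' (lift Z)"
    and proj_lift: "\<And>Z. separator V a b Z \<Longrightarrow> proj (lift Z) = Z"
    and mono_proj: "mono proj"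
    and cost_proj_le: "\<And>Z'. separator W a' b' Z' \<Longrightarrow> h (proj Z') \<le> f Z'"
    and cost_lift: "\<And>Z. separator V a b Z \<Longrightarrow> f (lift Z) = h Z"
begin

lemma min_separator_proj:
  assumes Z': "min_separator W f a' b' Z'"
  shows "min_separator V h a b (proj Z')"
proof -
  have "h (proj Z') \<le> h Y" if "separator V a b Y" for Y
  proof -
    have "h (proj Z') \<le> f Z'"
      using Z' cost_proj_le by (simp add: min_separator_def)
    also have "\<dots> \<le> f (lift Y)"
      using Z' lift_separator[OF that] by (simp add: min_separator_def)
    finally show ?thesis
      using cost_lift[OF that] by simp
  qed
  then show ?thesis
    using Z' proj_separator by (simp add: min_separator_def)
qed

lemma min_separator_lift:
  assumes Z: "min_separator V h a b Z"
  shows "min_separator W f a' b' (lift Z)"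
proof -
  have "f (lift Z) \<le> f Y'" if "separator W a' b' Y'" for Y'
  proof -
    have "f (lift Z) = h Z"
      using Z cost_lift by (simp add: min_separator_def)
    also have "\<dots> \<le> h (proj Y')"
      using Z proj_separator[OF that] by (simp add: min_separator_def)
    finally show ?thesis
      using cost_proj_le[OF that] by simp
  qed
  then show ?thesis
    using Z lift_separator by (simp add: min_separator_def)
qed

lemma is_smallest_min_sep_proj:
  assumes T: "is_smallest_min_sep W f a' b' T"
  shows "is_smallest_min_sep V h a b (proj T)"
proof -
  have "proj T \<subseteq> Z" if Z: "min_separator V h a b Z" for Z
  proof -
    have "T \<subseteq> lift Z"
      using T min_separator_lift[OF Z] by (simp add: is_smallest_min_sep_def)
    then have "proj T \<subseteq> proj (lift Z)"
      by (rule monoD[OF mono_proj])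
    then show ?thesis
      using Z proj_lift by (simp add: min_separator_def)
  qed
  with T min_separator_proj show ?thesis
    by (simp add: is_smallest_min_sep_def)
qed

lemma smallest_min_sep_proj:
  assumes "finite W" "a' \<in> W" "a' \<noteq> b'"
    and "\<And>X Y. separator W a' b' X \<Longrightarrow> separator W a' b' Y \<Longrightarrow>
                f (X \<inter> Y) + f (X \<union> Y) \<le> f X + f Y"
  shows "smallest_min_sep V h a b = proj (smallest_min_sep W f a' b')"
proof -
  obtain T where T: "is_smallest_min_sep W f a' b' T"
    using is_smallest_min_sep_exists[OF assms] by blast
  show ?thesis
    using smallest_min_sep_eq[OF T] smallest_min_sep_eq[OF is_smallest_min_sep_proj[OF T]] by simp
qed

end

lemma graph_dout_empty [simp]: "graph_dout {#} Z = 0"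
  by (simp add: graph_dout_def)

lemma graph_dout_add_mset [simp]:
  "graph_dout (add_mset (x, y) M) Z = of_bool (x \<in> Z \<and> y \<notin> Z) + graph_dout M Z"
  by (simp add: graph_dout_def)

lemma graph_dout_plus [simp]: "graph_dout (M + N) Z = graph_dout M Z + graph_dout N Z"
  by (simp add: graph_dout_def)

lemma graph_dout_replicate [simp]:
  "graph_dout (replicate_mset n (x, y)) Z = n * of_bool (x \<in> Z \<and> y \<notin> Z)"
  by (induction n) auto

lemma graph_dout_sum [simp]: "graph_dout (\<Sum>i\<in>I. M i) Z = (\<Sum>i\<in>I. graph_dout (M i) Z)"
  by (induction I rule: infinite_finite_induct) auto

lemma graph_dout_submodular:
  "graph_dout M (X \<inter> Y) + graph_dout M (X \<union> Y) \<le> graph_dout M X + graph_dout M Y"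
  by (induction M) auto

lemma reverse_arcs_add_mset [simp]:
  "reverse_arcs (add_mset (x, y) M) = add_mset (y, x) (reverse_arcs M)"
  by (simp add: reverse_arcs_def)

lemma reverse_arcs_plus [simp]: "reverse_arcs (M + N) = reverse_arcs M + reverse_arcs N"
  by (simp add: reverse_arcs_def)

lemma reverse_arcs_replicate [simp]:
  "reverse_arcs (replicate_mset n (x, y)) = replicate_mset n (y, x)"
  by (simp add: reverse_arcs_def)

lemma reverse_arcs_sum [simp]: "reverse_arcs (\<Sum>i\<in>I. M i) = (\<Sum>i\<in>I. reverse_arcs (M i))"
  by (induction I rule: infinite_finite_induct) (simp_all add: reverse_arcs_def)

lemma Inl_mem_Plus [simp]: "Inl x \<in> A <+> B \<longleftrightarrow> x \<in> A"
  by auto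

lemma Inr_mem_Plus [simp]: "Inr y \<in> A <+> B \<longleftrightarrow> y \<in> B"
  by auto

lemma aux_vertices_eq_Plus: "aux_vertices V E = V <+> E"
  by (simp add: aux_vertices_def Plus_def)

lemma smallest_min_sep_aux_vertices:
  fixes M :: "(('a + 'e) \<times> ('a + 'e)) multiset" and h :: "'a set \<Rightarrow> nat"
    and F :: "'a set \<Rightarrow> 'e set"
  assumes "finite V" "finite E" "a \<in> V" "a \<noteq> b"
    and cost_proj_le: "\<And>Z'. h {v \<in> V. Inl v \<in> Z'} \<le> graph_dout M Z'"
    and cost_lift: "\<And>Z. graph_dout M (Z <+> F Z) = h Z"
    and F_subset: "\<And>Z. F Z \<subseteq> E"
  shows "smallest_min_sep V h a b =
           {v \<in> V. Inl v \<in> smallest_min_sep (aux_vertices V E) (graph_dout M) (Inl a) (Inl b)}"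
proof -
  interpret separator_reduction "aux_vertices V E" "graph_dout M" "Inl a" "Inl b" V h a b
    "\<lambda>Z'. {v \<in> V. Inl v \<in> Z'}" "\<lambda>Z. Z <+> F Z"
  proof
    show "separator V a b {v \<in> V. Inl v \<in> Z'}" if "separator (aux_vertices V E) (Inl a) (Inl b) Z'" for Z'
      using that \<open>a \<in> V\<close> by (simp add: separator_def)
    show "separator (aux_vertices V E) (Inl a) (Inl b) (Z <+> F Z)" if "separator V a b Z" for Z
      using that F_subset[of Z] by (auto simp: separator_def aux_vertices_eq_Plus)
    show "{v \<in> V. Inl v \<in> Z <+> F Z} = Z" if "separator V a b Z" for Z
      using that by (auto simp: separator_def)
    show "mono (\<lambda>Z'. {v \<in> V. Inl v \<in> Z'})"
      by (auto intro: monoI)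
  qed (simp_all add: cost_proj_le cost_lift)
  show ?thesis
    by (rule smallest_min_sep_proj)
      (use assms(1-4) graph_dout_submodular in \<open>auto simp: aux_vertices_eq_Plus\<close>)
qed

lemma aux_arcs_dout:
  "graph_dout (aux_arcs E A) Z =
     (\<Sum>e\<in>E. of_bool (Inr e \<in> Z \<and> Inl (snd (A e)) \<notin> Z) +
        (card E + 1) * (\<Sum>x\<in>fst (A e). of_bool (Inl x \<in> Z \<and> Inr e \<notin> Z)))"
  by (simp add: aux_arcs_def sum_distrib_left)

lemma reverse_aux_arcs_dout:
  "graph_dout (reverse_arcs (aux_arcs E A)) Z =
     (\<Sum>e\<in>E. of_bool (Inl (snd (A e)) \<in> Z \<and> Inr e \<notin> Z) +
        (card E + 1) * (\<Sum>x\<in>fst (A e). of_bool (Inr e \<in> Z \<and> Inl x \<notin> Z)))"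
  by (simp add: aux_arcs_def sum_distrib_left)

lemma hyp_dout_sum:
  "finite E \<Longrightarrow> hyp_dout E A Z = (\<Sum>e\<in>E. of_bool (snd (A e) \<notin> Z \<and> fst (A e) \<inter> Z \<noteq> {}))"
  by (simp add: hyp_dout_def Int_def)

lemma hyp_din_sum:
  "finite E \<Longrightarrow> hyp_din E A Z = (\<Sum>e\<in>E. of_bool (snd (A e) \<in> Z \<and> \<not> fst (A e) \<subseteq> Z))"
  by (simp add: hyp_din_def Int_def)

lemma of_bool_le_add_mult_sum:
  fixes n :: nat
  assumes "finite X" "0 < n" "P \<Longrightarrow> Q \<or> (\<exists>x\<in>X. R x)"
  shows "of_bool P \<le> of_bool Q + n * (\<Sum>x\<in>X. of_bool (R x))"
proof (cases "P \<and> \<not> Q")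
  case True
  then obtain x where "x \<in> X" "R x"
    using assms(3) by blast
  then have "1 \<le> (\<Sum>x\<in>X. of_bool (R x) :: nat)"
    using member_le_sum[of x X "\<lambda>x. of_bool (R x) :: nat"] \<open>finite X\<close> by simp
  with \<open>0 < n\<close> have "1 \<le> n * (\<Sum>x\<in>X. of_bool (R x))"
    by (simp add: Suc_le_eq)
  then show ?thesis
    by simp
qed auto

lemma dir_hypergraph_hyperarcD:
  assumes "dir_hypergraph V E A" "e \<in> E"
  shows "finite (fst (A e))" "fst (A e) \<subseteq> V" "snd (A e) \<in> V"
  using assms by (auto simp: dir_hypergraph_def intro: finite_subset)

lemma hyp_dout_le_aux_dout:
  assumes "dir_hypergraph V E A"
  shows "hyp_dout E A {v \<in> V. Inl v \<in> Z} \<le> graph_dout (aux_arcs E A) Z"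
proof -
  have "finite E"
    using assms by (simp add: dir_hypergraph_def)
  then show ?thesis
    unfolding hyp_dout_sum[OF \<open>finite E\<close>] aux_arcs_dout
    using dir_hypergraph_hyperarcD[OF assms] by (intro sum_mono of_bool_le_add_mult_sum) auto
qed

lemma hyp_din_le_reverse_aux_dout:
  assumes "dir_hypergraph V E A"
  shows "hyp_din E A {v \<in> V. Inl v \<in> Z} \<le> graph_dout (reverse_arcs (aux_arcs E A)) Z"
proof -
  have "finite E"
    using assms by (simp add: dir_hypergraph_def)
  then show ?thesis
    unfolding hyp_din_sum[OF \<open>finite E\<close>] reverse_aux_arcs_dout
    using dir_hypergraph_hyperarcD[OF assms] by (intro sum_mono of_bool_le_add_mult_sum) auto
qed

lemma aux_dout_lift:
  assumes "finite E"
  shows "graph_dout (aux_arcs E A) (Z <+> {e \<in> E. fst (A e) \<inter> Z \<noteq> {}}) = hyp_dout E A Z"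
  unfolding aux_arcs_dout hyp_dout_sum[OF assms]
proof (rule sum.cong[OF refl])
  fix e assume "e \<in> E"
  let ?Z' = "Z <+> {e \<in> E. fst (A e) \<inter> Z \<noteq> {}}"
  have "(\<Sum>x\<in>fst (A e). of_bool (Inl x \<in> ?Z' \<and> Inr e \<notin> ?Z')) = (0::nat)"
    by (rule sum.neutral) (use \<open>e \<in> E\<close> in auto)
  with \<open>e \<in> E\<close> show "of_bool (Inr e \<in> ?Z' \<and> Inl (snd (A e)) \<notin> ?Z') +
      (card E + 1) * (\<Sum>x\<in>fst (A e). of_bool (Inl x \<in> ?Z' \<and> Inr e \<notin> ?Z')) =
      of_bool (snd (A e) \<notin> Z \<and> fst (A e) \<inter> Z \<noteq> {})"
    by (simp add: conj_commute)
qed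

lemma reverse_aux_dout_lift:
  assumes "finite E"
  shows "graph_dout (reverse_arcs (aux_arcs E A)) (Z <+> {e \<in> E. fst (A e) \<subseteq> Z}) = hyp_din E A Z"
  unfolding reverse_aux_arcs_dout hyp_din_sum[OF assms]
proof (rule sum.cong[OF refl])
  fix e assume "e \<in> E"
  let ?Z' = "Z <+> {e \<in> E. fst (A e) \<subseteq> Z}"
  have "(\<Sum>x\<in>fst (A e). of_bool (Inr e \<in> ?Z' \<and> Inl x \<notin> ?Z')) = (0::nat)"
    by (rule sum.neutral) (use \<open>e \<in> E\<close> in auto)
  with \<open>e \<in> E\<close> show "of_bool (Inl (snd (A e)) \<in> ?Z' \<and> Inr e \<notin> ?Z') +
      (card E + 1) * (\<Sum>x\<in>fst (A e). of_bool (Inr e \<in> ?Z' \<and> Inl x \<notin> ?Z')) =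
      of_bool (snd (A e) \<in> Z \<and> \<not> fst (A e) \<subseteq> Z)"
    by simp
qed

theorem mainTheorem14:
  fixes V :: "'a set" and E :: "'e set" and A :: "'e \<Rightarrow> 'a set \<times> 'a" and s t :: 'a
  assumes "dir_hypergraph V E A"
    and "s \<in> V" and "t \<in> V" and "s \<noteq> t"
  shows "smallest_min_sep V (hyp_dout E A) s t =
           {v \<in> V. Inl v \<in> smallest_min_sep (aux_vertices V E) (graph_dout (aux_arcs E A)) (Inl s) (Inl t)} \<and>
         smallest_min_sep V (hyp_din E A) t s =
           {v \<in> V. Inl v \<in> smallest_min_sep (aux_vertices V E) (graph_dout (reverse_arcs (aux_arcs E A))) (Inl t) (Inl s)}"
proof
  have fin: "finite V" "finite E"
    using assms(1) by (simp_all add: dir_hypergraph_def)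
  show "smallest_min_sep V (hyp_dout E A) s t =
      {v \<in> V. Inl v \<in> smallest_min_sep (aux_vertices V E) (graph_dout (aux_arcs E A)) (Inl s) (Inl t)}"
    using fin \<open>s \<in> V\<close> \<open>s \<noteq> t\<close> hyp_dout_le_aux_dout[OF assms(1)] aux_dout_lift[OF fin(2)]
    by (rule smallest_min_sep_aux_vertices) blast
  show "smallest_min_sep V (hyp_din E A) t s =
      {v \<in> V. Inl v \<in> smallest_min_sep (aux_vertices V E) (graph_dout (reverse_arcs (aux_arcs E A))) (Inl t) (Inl s)}"
    using fin \<open>t \<in> V\<close> \<open>s \<noteq> t\<close>[symmetric]
      hyp_din_le_reverse_aux_dout[OF assms(1)] reverse_aux_dout_lift[OF fin(2)]
    by (rule smallest_min_sep_aux_vertices) blast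
qed

end
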